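(* Let $\mathcal{M}$ be a two-agent fully cooperative Dec-POMDP whose set $\Phi$ of equivalence mappings is finite, and let $\pi = (\pi^1, \pi^2)$ be any joint policy. Define the other-play return $$J_{OP}(\pi) = \mathbb{E}_{\phi \sim \mathrm{Unif}(\Phi)}\, J\big(\pi^1, \phi(\pi^2)\big).$$ For $i=1,2$ let $\pi^i_\Phi$ be the uniform mixture of the policies $\{\phi(\pi^i) : \phi\in\Phi\}$, i.e. agent $i$ draws $\phi_i$ uniformly from $\Phi$ before the episode and then plays $\phi_i(\pi^i)$, the draws of the two agents being independent; its return is $J(\pi_\Phi) = \mathbb{E}_{\phi_1,\phi_2 \sim \mathrm{Unif}(\Phi)\text{ i.i.d.}}\, J(\phi_1(\pi^1), \phi_2(\pi^2))$. Then $J_{OP}(\pi) = J(\pi_\Phi)$.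
   Context: A two-agent fully cooperative Dec-POMDP consists of state set $\mathcal{S}$, action set $\mathcal{A}$, observation function $O(o\mid i,s)$, transition kernel $P(s'\mid s,\mathbf{a})$ on joint actions, and shared reward $R(s',\mathbf{a},s)$. Agent $i$ acts via a stochastic policy $\pi^i(a^i\mid\tau^i_t)$ on its action-observation history $\tau^i_t = \{o^i_0,a^i_0,r_0,\dots,o^i_t\}$; $J(\pi^1,\pi^2)$ is the expected discounted return $\mathbb{E}[\sum_t\gamma^t r_t]$. An equivalence mapping $\phi$ is a triple of bijections of $\mathcal{S}$, $\mathcal{A}$ (componentwise on joint actions) and the observation space onto themselves with $P(\phi(s')\mid\phi(s),\phi(a)) = P(s'\mid s,a)$, $R(\phi(s'),\phi(a),\phi(s)) = R(s',a,s)$, $O(\phi(o)\mid\phi(s),\phi(a),i) = O(o\mid s,a,i)$ for all arguments; $\Phi$ is the set of all of them. $\phi$ acts on histories elementwise, $\phi(\tau^i_t) = \{\phi(o^i_0),\phi(a^i_0),\phi(r_0),\dots,\phi(o^i_t)\}$ (rewards unchanged), and on policies by $\pi'=\phi(\pi)$ iff $\pi'(\phi(a)\mid\phi(\tau)) = \pi(a\mid\tau)$ for all $\tau,a$. *)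

theory Defs
  imports "HOL-Probability.Probability"
begin

text \<open>Agents are indexed 1 and 2;
  both agents share the action set 'a and the observation space 'o.
  init: initial state distribution; trans s (a1,a2): distribution of s';
  rew s' (a1,a2) s: shared reward R(s',a,s); obs i s: observation distribution
  O(. | i, s) of agent i in state s; disc: discount factor gamma.\<close>
record ('s, 'a, 'o) decpomdp =
  init :: "'s pmf"
  trans :: "'s \<Rightarrow> 'a \<times> 'a \<Rightarrow> 's pmf"
  rew :: "'s \<Rightarrow> 'a \<times> 'a \<Rightarrow> 's \<Rightarrow> real"
  obs :: "nat \<Rightarrow> 's \<Rightarrow> 'o pmf"
  disc :: real

text \<open>Action-observation history o_0,a_0,r_0,...,o_t: list of past
  (o_k, a_k, r_k) in chronological order, together with the current o_t.\<close>
type_synonym ('o, 'a) hist = "('o \<times> 'a \<times> real) list \<times> 'o"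
type_synonym ('o, 'a) policy = "('o, 'a) hist \<Rightarrow> 'a pmf"
type_synonym ('s, 'o, 'a) config = "'s \<times> ('o, 'a) hist \<times> ('o, 'a) hist"
type_synonym ('s, 'a, 'o) emap = "('s \<Rightarrow> 's) \<times> ('a \<Rightarrow> 'a) \<times> ('o \<Rightarrow> 'o)"

definition hist_ext :: "('o, 'a) hist \<Rightarrow> 'a \<Rightarrow> real \<Rightarrow> 'o \<Rightarrow> ('o, 'a) hist" where
  "hist_ext h a r ob = (fst h @ [(snd h, a, r)], ob)"

definition init_config :: "('s, 'a, 'o) decpomdp \<Rightarrow> ('s, 'o, 'a) config pmf" where
  "init_config M =
     bind_pmf (init M) (\<lambda>s. bind_pmf (obs M 1 s) (\<lambda>o1. bind_pmf (obs M 2 s) (\<lambda>o2.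
       return_pmf (s, ([], o1), ([], o2)))))"

definition step :: "('s, 'a, 'o) decpomdp \<Rightarrow> ('o, 'a) policy \<Rightarrow> ('o, 'a) policy
    \<Rightarrow> ('s, 'o, 'a) config \<Rightarrow> (real \<times> ('s, 'o, 'a) config) pmf" where
  "step M \<pi>1 \<pi>2 c = (case c of (s, h1, h2) \<Rightarrow>
     bind_pmf (\<pi>1 h1) (\<lambda>a1. bind_pmf (\<pi>2 h2) (\<lambda>a2.
     bind_pmf (trans M s (a1, a2)) (\<lambda>s'.
     bind_pmf (obs M 1 s') (\<lambda>o1. bind_pmf (obs M 2 s') (\<lambda>o2.
       let r = rew M s' (a1, a2) s in
       return_pmf (r, (s', hist_ext h1 a1 r o1, hist_ext h2 a2 r o2))))))))"

fun config :: "('s, 'a, 'o) decpomdp \<Rightarrow> ('o, 'a) policy \<Rightarrow> ('o, 'a) policy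
    \<Rightarrow> nat \<Rightarrow> ('s, 'o, 'a) config pmf" where
  "config M \<pi>1 \<pi>2 0 = init_config M"
| "config M \<pi>1 \<pi>2 (Suc t) = bind_pmf (config M \<pi>1 \<pi>2 t) (\<lambda>c. map_pmf snd (step M \<pi>1 \<pi>2 c))"

definition exp_reward :: "('s, 'a, 'o) decpomdp \<Rightarrow> ('o, 'a) policy \<Rightarrow> ('o, 'a) policy
    \<Rightarrow> nat \<Rightarrow> real" where
  "exp_reward M \<pi>1 \<pi>2 t =
     measure_pmf.expectation (bind_pmf (config M \<pi>1 \<pi>2 t) (step M \<pi>1 \<pi>2)) fst"

definition J :: "('s, 'a, 'o) decpomdp \<Rightarrow> ('o, 'a) policy \<Rightarrow> ('o, 'a) policy \<Rightarrow> real" where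
  "J M \<pi>1 \<pi>2 = (\<Sum>t. disc M ^ t * exp_reward M \<pi>1 \<pi>2 t)"

text \<open>Equivalence mappings (including invariance of the initial state distribution).\<close>
definition is_emap :: "('s, 'a, 'o) decpomdp \<Rightarrow> ('s, 'a, 'o) emap \<Rightarrow> bool" where
  "is_emap M \<phi> = (case \<phi> of (fS, fA, fO) \<Rightarrow>
     bij fS \<and> bij fA \<and> bij fO \<and>
     (\<forall>s s' a1 a2. pmf (trans M (fS s) (fA a1, fA a2)) (fS s') = pmf (trans M s (a1, a2)) s') \<and>
     (\<forall>s' a1 a2 s. rew M (fS s') (fA a1, fA a2) (fS s) = rew M s' (a1, a2) s) \<and>
     (\<forall>i s ob. pmf (obs M i (fS s)) (fO ob) = pmf (obs M i s) ob) \<and>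
     (\<forall>s. pmf (init M) (fS s) = pmf (init M) s))"

definition emaps :: "('s, 'a, 'o) decpomdp \<Rightarrow> ('s, 'a, 'o) emap set" where
  "emaps M = {\<phi>. is_emap M \<phi>}"

definition hist_map :: "('o \<Rightarrow> 'o) \<Rightarrow> ('a \<Rightarrow> 'a) \<Rightarrow> ('o, 'a) hist \<Rightarrow> ('o, 'a) hist" where
  "hist_map fO fA h = (map (\<lambda>(ob, a, r). (fO ob, fA a, r)) (fst h), fO (snd h))"

text \<open>phi acting on policies: phi(pi)(phi a | phi tau) = pi(a | tau).\<close>
definition pol_map :: "('s, 'a, 'o) emap \<Rightarrow> ('o, 'a) policy \<Rightarrow> ('o, 'a) policy" where
  "pol_map \<phi> \<pi> = (case \<phi> of (fS, fA, fO) \<Rightarrow>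
     (\<lambda>\<tau>. map_pmf fA (\<pi> (hist_map (inv fO) (inv fA) \<tau>))))"

end

theory Submission
  imports Defs
begin

text \<open>An equivalence mapping \<open>\<phi>\<close> relabels every trajectory of the joint process bijectively and
  preserves its probability and rewards, so \<open>J (\<phi>(\<pi>\<^sup>1), \<phi>(\<pi>\<^sup>2)) = J (\<pi>\<^sup>1, \<pi>\<^sup>2)\<close>. The equivalence mappings form a finite group under composition,
  so for fixed \<open>\<phi>\<^sub>1\<close> the map \<open>\<phi>\<^sub>2 \<mapsto> \<phi>\<^sub>1\<^sup>-\<^sup>1 \<circ> \<phi>\<^sub>2\<close> permutes \<open>\<Phi>\<close> and
  \<open>\<Sum>\<^sub>\<phi>\<^sub>2 J (\<phi>\<^sub>1(\<pi>\<^sup>1), \<phi>\<^sub>2(\<pi>\<^sup>2)) = \<Sum>\<^sub>\<psi> J (\<phi>\<^sub>1(\<pi>\<^sup>1), \<phi>\<^sub>1(\<psi>(\<pi>\<^sup>2))) = \<Sum>\<^sub>\<psi> J (\<pi>\<^sup>1, \<psi>(\<pi>\<^sup>2))\<close>,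
  which is independent of \<open>\<phi>\<^sub>1\<close>.\<close>

lemma map_pmf_eqI_bij:
  assumes "bij f" and "\<And>x. pmf p (f x) = pmf q x"
  shows "p = map_pmf f q"
proof (rule pmf_eqI)
  fix y
  obtain x where "y = f x" using \<open>bij f\<close> by (metis bij_pointE)
  then show "pmf p y = pmf (map_pmf f q) y"
    using assms by (simp add: pmf_map_inj' bij_is_inj)
qed

lemma
  assumes "is_emap M (fS, fA, fO)"
  shows is_emap_bij: "bij fS" "bij fA" "bij fO"
    and is_emap_trans: "trans M (fS s) (fA a1, fA a2) = map_pmf fS (trans M s (a1, a2))"
    and is_emap_obs: "obs M i (fS s) = map_pmf fO (obs M i s)"
    and is_emap_init: "init M = map_pmf fS (init M)"
    and is_emap_rew: "rew M (fS s') (fA a1, fA a2) (fS s) = rew M s' (a1, a2) s"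
  using assms by (auto simp: is_emap_def intro!: map_pmf_eqI_bij)

lemma hist_map_inv_hist_map:
  assumes "inj fO" "inj fA"
  shows "hist_map (inv fO) (inv fA) (hist_map fO fA h) = h"
  using assms by (auto simp: hist_map_def case_prod_beta prod_eq_iff intro!: map_idI)

lemma pol_map_hist_map:
  assumes "bij fA" "bij fO"
  shows "pol_map (fS, fA, fO) \<pi> (hist_map fO fA h) = map_pmf fA (\<pi> h)"
  using assms by (simp add: pol_map_def hist_map_inv_hist_map bij_is_inj)

definition config_map :: "('s \<Rightarrow> 's) \<Rightarrow> ('a \<Rightarrow> 'a) \<Rightarrow> ('o \<Rightarrow> 'o)
    \<Rightarrow> ('s, 'o, 'a) config \<Rightarrow> ('s, 'o, 'a) config" where
  "config_map fS fA fO c = (case c of (s, h1, h2) \<Rightarrow> (fS s, hist_map fO fA h1, hist_map fO fA h2))"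

lemma step_pol_map:
  assumes "is_emap M (fS, fA, fO)"
  shows "step M (pol_map (fS, fA, fO) \<pi>1) (pol_map (fS, fA, fO) \<pi>2) (config_map fS fA fO c)
       = map_pmf (apsnd (config_map fS fA fO)) (step M \<pi>1 \<pi>2 c)"
proof -
  obtain s h1 h2 where c: "c = (s, h1, h2)" by (cases c) auto
  note bij = is_emap_bij[OF assms]
  show ?thesis
    unfolding c config_map_def step_def prod.case
    by (simp only: pol_map_hist_map[OF bij(2,3)] bind_map_pmf is_emap_trans[OF assms]
        is_emap_obs[OF assms] is_emap_rew[OF assms])
      (simp add: map_bind_pmf Let_def hist_ext_def hist_map_def is_emap_rew[OF assms])
qed

lemma config_pol_map:
  assumes "is_emap M (fS, fA, fO)"
  shows "config M (pol_map (fS, fA, fO) \<pi>1) (pol_map (fS, fA, fO) \<pi>2) t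
       = map_pmf (config_map fS fA fO) (config M \<pi>1 \<pi>2 t)"
proof (induction t)
  case 0
  have "init_config M = map_pmf (config_map fS fA fO) (init_config M)"
    by (subst init_config_def, subst is_emap_init[OF assms])
      (simp add: init_config_def is_emap_obs[OF assms] bind_map_pmf map_bind_pmf
        config_map_def hist_map_def)
  then show ?case by simp
next
  case (Suc t)
  then show ?case
    by (simp add: bind_map_pmf step_pol_map[OF assms] map_bind_pmf pmf.map_comp o_def)
qed

lemma exp_reward_pol_map:
  assumes "is_emap M (fS, fA, fO)"
  shows "exp_reward M (pol_map (fS, fA, fO) \<pi>1) (pol_map (fS, fA, fO) \<pi>2) t = exp_reward M \<pi>1 \<pi>2 t"
  unfolding exp_reward_def
  by (simp add: config_pol_map[OF assms] bind_map_pmf step_pol_map[OF assms] flip: map_bind_pmf)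

lemma J_pol_map:
  assumes "is_emap M \<phi>"
  shows "J M (pol_map \<phi> \<pi>1) (pol_map \<phi> \<pi>2) = J M \<pi>1 \<pi>2"
  using assms by (cases \<phi>) (simp add: J_def exp_reward_pol_map)

definition emap_comp :: "('s, 'a, 'o) emap \<Rightarrow> ('s, 'a, 'o) emap \<Rightarrow> ('s, 'a, 'o) emap" where
  "emap_comp \<phi> \<psi> = (case \<phi> of (fS, fA, fO) \<Rightarrow> case \<psi> of (gS, gA, gO) \<Rightarrow> (fS \<circ> gS, fA \<circ> gA, fO \<circ> gO))"

lemma is_emap_id: "is_emap M (id, id, id)"
  by (simp add: is_emap_def)

lemma is_emap_comp:
  assumes "is_emap M \<phi>" "is_emap M \<psi>"
  shows "is_emap M (emap_comp \<phi> \<psi>)"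
  using assms by (cases \<phi>; cases \<psi>) (auto simp: is_emap_def emap_comp_def bij_comp)

lemma pol_map_emap_comp:
  assumes "is_emap M \<phi>" "is_emap M \<psi>"
  shows "pol_map (emap_comp \<phi> \<psi>) \<pi> = pol_map \<phi> (pol_map \<psi> \<pi>)"
proof -
  obtain fS fA fO gS gA gO where \<phi>: "\<phi> = (fS, fA, fO)" and \<psi>: "\<psi> = (gS, gA, gO)"
    by (cases \<phi>; cases \<psi>) auto
  have "bij fA" "bij fO" "bij gA" "bij gO"
    using assms by (auto simp: \<phi> \<psi> is_emap_def)
  then show ?thesis
    unfolding \<phi> \<psi> emap_comp_def pol_map_def prod.case
    by (simp only: o_inv_distrib)
      (simp add: fun_eq_iff pmf.map_comp hist_map_def case_prod_unfold o_def)
qed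

lemma inj_emap_comp:
  assumes "is_emap M \<phi>"
  shows "inj (emap_comp \<phi>)"
proof -
  obtain fS fA fO where \<phi>: "\<phi> = (fS, fA, fO)" by (cases \<phi>) auto
  have "inj fS" "inj fA" "inj fO"
    using assms by (auto simp: \<phi> is_emap_def bij_is_inj)
  then show ?thesis
    by (auto simp: inj_def \<phi> emap_comp_def fun_eq_iff inj_eq split: prod.splits)
qed

lemma bij_betw_emap_comp:
  assumes "finite (emaps M)" "is_emap M \<phi>"
  shows "bij_betw (emap_comp \<phi>) (emaps M) (emaps M)"
proof -
  have "emap_comp \<phi> ` emaps M \<subseteq> emaps M"
    using is_emap_comp[OF assms(2)] by (auto simp: emaps_def)
  moreover have "inj_on (emap_comp \<phi>) (emaps M)"
    using inj_emap_comp[OF assms(2)] by (rule inj_on_subset) simp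
  ultimately show ?thesis
    using endo_inj_surj[OF assms(1)] by (simp add: bij_betw_def)
qed

lemma sum_J_pol_map_left:
  assumes "finite (emaps M)" "\<phi>1 \<in> emaps M"
  shows "(\<Sum>\<phi>2\<in>emaps M. J M (pol_map \<phi>1 \<pi>1) (pol_map \<phi>2 \<pi>2))
       = (\<Sum>\<psi>\<in>emaps M. J M \<pi>1 (pol_map \<psi> \<pi>2))"
proof -
  have \<phi>1: "is_emap M \<phi>1" using assms(2) by (simp add: emaps_def)
  have "(\<Sum>\<phi>2\<in>emaps M. J M (pol_map \<phi>1 \<pi>1) (pol_map \<phi>2 \<pi>2))
      = (\<Sum>\<psi>\<in>emaps M. J M (pol_map \<phi>1 \<pi>1) (pol_map (emap_comp \<phi>1 \<psi>) \<pi>2))"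
    by (rule sum.reindex_bij_betw[OF bij_betw_emap_comp[OF assms(1) \<phi>1], symmetric])
  also have "\<dots> = (\<Sum>\<psi>\<in>emaps M. J M \<pi>1 (pol_map \<psi> \<pi>2))"
    by (intro sum.cong refl)
      (simp add: emaps_def pol_map_emap_comp[OF \<phi>1] J_pol_map[OF \<phi>1])
  finally show ?thesis .
qed

theorem proposition1:
  fixes M :: "('s, 'a, 'o) decpomdp" and \<pi>1 \<pi>2 :: "('o, 'a) policy"
  assumes "finite (emaps M)"
    and "0 \<le> disc M" and "disc M < 1"
    and "\<exists>B. \<forall>s' a s. \<bar>rew M s' a s\<bar> \<le> B"
  shows "(1 / real (card (emaps M))) * (\<Sum>\<phi>\<in>emaps M. J M \<pi>1 (pol_map \<phi> \<pi>2))
       = (1 / real (card (emaps M)) ^ 2) *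
           (\<Sum>\<phi>1\<in>emaps M. \<Sum>\<phi>2\<in>emaps M. J M (pol_map \<phi>1 \<pi>1) (pol_map \<phi>2 \<pi>2))"
proof -
  have "card (emaps M) > 0"
    using assms(1) is_emap_id by (auto simp: card_gt_0_iff emaps_def)
  moreover have "(\<Sum>\<phi>1\<in>emaps M. \<Sum>\<phi>2\<in>emaps M. J M (pol_map \<phi>1 \<pi>1) (pol_map \<phi>2 \<pi>2))
      = real (card (emaps M)) * (\<Sum>\<phi>\<in>emaps M. J M \<pi>1 (pol_map \<phi> \<pi>2))"
    using sum_J_pol_map_left[OF assms(1)] by simp
  ultimately show ?thesis by (simp add: power2_eq_square)
qed

end
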